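(* Let $\Omega\subset\mathbb{R}^N$ be an open bounded domain, $1\le j\le N$, and $x_0\in\Omega$. Then there exist $g\in C(\partial\Omega)$ and $u_0\in C(\overline\Omega)$ with $u_0|_{\partial\Omega}=g$, and constants $\mu_1>0$, $k>0$, such that the viscosity solution $u$ of $u_t-\lambda_j(D^2u)=0$ in $\Omega\times(0,\infty)$, $u=g$ on $\partial\Omega\times(0,\infty)$, $u(\cdot,0)=u_0$ in $\Omega$, and the viscosity solution $z$ of $\lambda_j(D^2z)=0$ in $\Omega$, $z=g$ on $\partial\Omega$, satisfy \[ u(x_0,t)\ge z(x_0)+ke^{-\mu_1t}\quad\text{for all }t>0. \] (Analogously, $g,u_0$ can be chosen so that $u(x_0,t)\le z(x_0)-ke^{-\mu_1 t}$ for all $t>0$.)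
   Context: $\lambda_j(A)$ is the $j$-th smallest eigenvalue of a symmetric $N\times N$ matrix $A$, $\lambda_j(A)=\inf_{\dim S=j}\sup_{v\in S,|v|=1}\langle Av,v\rangle$. Solutions are viscosity solutions continuous up to the boundary and attaining the data pointwise. *)

theory Defs
  imports "HOL-Analysis.Analysis"
begin

text \<open>j-th smallest eigenvalue of a (symmetric) N x N matrix, via the
  Courant--Fischer min-max formula of the paper:
  lambda_j(A) = inf over subspaces S of dimension j of sup over unit v in S of (A v) . v\<close>
definition lambda_j :: "nat \<Rightarrow> real^'n^'n \<Rightarrow> real" where
  "lambda_j j A = Inf {Sup {(A *v v) \<bullet> v | v. v \<in> S \<and> norm v = 1} | S. subspace S \<and> dim S = j}"

definition C2_with :: "(real^'n \<Rightarrow> real) \<Rightarrow> (real^'n \<Rightarrow> real^'n) \<Rightarrow> (real^'n \<Rightarrow> real^'n^'n) \<Rightarrow> bool" where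
  "C2_with \<phi> G H \<longleftrightarrow>
     (\<forall>x. (\<phi> has_derivative (\<lambda>h. G x \<bullet> h)) (at x)) \<and>
     (\<forall>x. (G has_derivative (\<lambda>h. H x *v h)) (at x)) \<and>
     continuous_on UNIV H"

definition C21_with :: "(real^'n \<Rightarrow> real \<Rightarrow> real) \<Rightarrow> (real^'n \<Rightarrow> real \<Rightarrow> real^'n)
     \<Rightarrow> (real^'n \<Rightarrow> real \<Rightarrow> real^'n^'n) \<Rightarrow> (real^'n \<Rightarrow> real \<Rightarrow> real) \<Rightarrow> bool" where
  "C21_with \<phi> G H T \<longleftrightarrow>
     (\<forall>x t. ((\<lambda>y. \<phi> y t) has_derivative (\<lambda>h. G x t \<bullet> h)) (at x)) \<and>
     (\<forall>x t. ((\<lambda>y. G y t) has_derivative (\<lambda>h. H x t *v h)) (at x)) \<and>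
     (\<forall>x t. ((\<lambda>s. \<phi> x s) has_real_derivative T x t) (at t)) \<and>
     continuous_on UNIV (\<lambda>(x,t). \<phi> x t) \<and>
     continuous_on UNIV (\<lambda>(x,t). G x t) \<and>
     continuous_on UNIV (\<lambda>(x,t). H x t) \<and>
     continuous_on UNIV (\<lambda>(x,t). T x t)"

text \<open>Viscosity solution of lambda_j(D^2 z) = 0 in Omega (written as -lambda_j(D^2 z) = 0,
  a degenerate elliptic equation), continuous up to the boundary with z = g on the boundary.\<close>
definition visc_super_ell :: "nat \<Rightarrow> (real^'n) set \<Rightarrow> (real^'n \<Rightarrow> real) \<Rightarrow> bool" where
  "visc_super_ell j \<Omega> z \<longleftrightarrow>
     (\<forall>x\<in>\<Omega>. \<forall>\<phi> G H. C2_with \<phi> G H \<and>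
        (\<exists>e>0. \<forall>y\<in>\<Omega>. dist y x < e \<longrightarrow> z y - \<phi> y \<ge> z x - \<phi> x)
        \<longrightarrow> lambda_j j (H x) \<le> 0)"

definition visc_sub_ell :: "nat \<Rightarrow> (real^'n) set \<Rightarrow> (real^'n \<Rightarrow> real) \<Rightarrow> bool" where
  "visc_sub_ell j \<Omega> z \<longleftrightarrow>
     (\<forall>x\<in>\<Omega>. \<forall>\<phi> G H. C2_with \<phi> G H \<and>
        (\<exists>e>0. \<forall>y\<in>\<Omega>. dist y x < e \<longrightarrow> z y - \<phi> y \<le> z x - \<phi> x)
        \<longrightarrow> lambda_j j (H x) \<ge> 0)"

definition elliptic_solution ::
  "nat \<Rightarrow> (real^'n) set \<Rightarrow> (real^'n \<Rightarrow> real) \<Rightarrow> (real^'n \<Rightarrow> real) \<Rightarrow> bool" where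
  "elliptic_solution j \<Omega> g z \<longleftrightarrow>
     continuous_on (closure \<Omega>) z \<and>
     (\<forall>x\<in>frontier \<Omega>. z x = g x) \<and>
     visc_super_ell j \<Omega> z \<and> visc_sub_ell j \<Omega> z"

definition visc_super_par :: "nat \<Rightarrow> (real^'n) set \<Rightarrow> (real^'n \<Rightarrow> real \<Rightarrow> real) \<Rightarrow> bool" where
  "visc_super_par j \<Omega> u \<longleftrightarrow>
     (\<forall>x\<in>\<Omega>. \<forall>t>0. \<forall>\<phi> G H T. C21_with \<phi> G H T \<and>
        (\<exists>e>0. \<forall>y\<in>\<Omega>. \<forall>s>0. dist y x < e \<and> \<bar>s - t\<bar> < e \<longrightarrow> u y s - \<phi> y s \<ge> u x t - \<phi> x t)
        \<longrightarrow> T x t - lambda_j j (H x t) \<ge> 0)"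

definition visc_sub_par :: "nat \<Rightarrow> (real^'n) set \<Rightarrow> (real^'n \<Rightarrow> real \<Rightarrow> real) \<Rightarrow> bool" where
  "visc_sub_par j \<Omega> u \<longleftrightarrow>
     (\<forall>x\<in>\<Omega>. \<forall>t>0. \<forall>\<phi> G H T. C21_with \<phi> G H T \<and>
        (\<exists>e>0. \<forall>y\<in>\<Omega>. \<forall>s>0. dist y x < e \<and> \<bar>s - t\<bar> < e \<longrightarrow> u y s - \<phi> y s \<le> u x t - \<phi> x t)
        \<longrightarrow> T x t - lambda_j j (H x t) \<le> 0)"

definition parabolic_solution ::
  "nat \<Rightarrow> (real^'n) set \<Rightarrow> (real^'n \<Rightarrow> real) \<Rightarrow> (real^'n \<Rightarrow> real) \<Rightarrow> (real^'n \<Rightarrow> real \<Rightarrow> real) \<Rightarrow> bool" where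
  "parabolic_solution j \<Omega> g u0 u \<longleftrightarrow>
     continuous_on (closure \<Omega> \<times> {0..}) (\<lambda>(x,t). u x t) \<and>
     (\<forall>x\<in>frontier \<Omega>. \<forall>t>0. u x t = g x) \<and>
     (\<forall>x\<in>\<Omega>. u x 0 = u0 x) \<and>
     visc_super_par j \<Omega> u \<and> visc_sub_par j \<Omega> u"

end

theory Submission
  imports Defs
begin

text \<open>
  Fix a coordinate \<open>i\<close>, a set \<open>K\<close> of \<open>j - 1\<close> other coordinates, and let \<open>L\<close> be the remaining
  \<open>N - j\<close> ones. The saddle \<open>h(x) = \<Sum>\<^sub>k\<^sub>\<in>\<^sub>L (x\<^sub>k - x0\<^sub>k)\<^sup>2 - \<Sum>\<^sub>k\<^sub>\<in>\<^sub>K (x\<^sub>k - x0\<^sub>k)\<^sup>2\<close> has a diagonal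
  Hessian with \<open>j\<close> nonpositive and \<open>N + 1 - j\<close> nonnegative entries, so \<open>lambda_j(D\<^sup>2h) = 0\<close>.
  Taking \<open>g = h\<close>, comparison with the strict sub- and supersolutions
  \<open>h \<plusminus> \<epsilon>(|x - x0|\<^sup>2 - R\<^sup>2)\<close> pins the elliptic solution to \<open>z = h\<close>, so \<open>z(x0) = 0\<close>.

  Let \<open>u0 = h + \<rho>\<^sup>2\<phi>\<close>, where \<open>0 \<le> \<phi>\<close> vanishes on the boundary and is \<open>1\<close> on a cylinder \<open>C\<close>
  with axis \<open>e\<^sub>i\<close> through \<open>x0\<close>, radius and half-length \<open>\<rho>\<close>. Comparison with \<open>h - \<epsilon>(1 + t)\<close>
  gives \<open>u \<ge> h\<close>. On \<open>C\<close>, with \<open>a = \<pi>/(2\<rho>)\<close> and \<open>\<mu> = a\<^sup>2\<close>, the function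
  \<open>h(x) - \<Sum>\<^sub>k\<^sub>\<noteq>\<^sub>i (x\<^sub>k - x0\<^sub>k)\<^sup>2 + \<rho>\<^sup>2 exp(-\<mu>t) cos(a(x\<^sub>i - x0\<^sub>i))\<close> is a subsolution: the cosine
  mode solves the heat equation in the direction \<open>e\<^sub>i\<close>, and subtracting the transverse
  paraboloid turns the Hessian entries along \<open>L\<close> into \<open>0\<close>, so that \<open>lambda_j\<close> of the Hessian
  is at least its (nonpositive) entry in the direction \<open>e\<^sub>i\<close>.
  It lies below \<open>u\<close> on the parabolic boundary of \<open>C\<close>, hence \<open>u(x0, t) \<ge> \<rho>\<^sup>2 exp(-\<mu>t)\<close>.
  The upper estimate is symmetric, with \<open>u0 = h - \<rho>\<^sup>2\<phi>\<close>.

  Since every comparison is with a strict classical sub- or supersolution, it reduces to the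
  definition of viscosity solution at an extremum of the difference; in the parabolic case a
  penalty \<open>\<beta> exp(l t)\<close> keeps the extremum away from the final time.
\<close>

section \<open>Courant--Fischer bounds for \<open>lambda_j\<close>\<close>

definition coord_subspace :: "'n set \<Rightarrow> (real^'n) set" where
  "coord_subspace I = {x. \<forall>i. i \<notin> I \<longrightarrow> x $ i = 0}"

lemma subspace_coord_subspace: "subspace (coord_subspace I)"
  by (auto simp: subspace_def coord_subspace_def)

lemma dim_coord_subspace: "dim (coord_subspace (I :: 'n::finite set)) = card I"
proof -
  let ?B = "(\<lambda>i. axis i (1::real)) ` I"
  have "coord_subspace I = {x. \<forall>b\<in>Basis. b \<notin> ?B \<longrightarrow> x \<bullet> b = 0}"
    unfolding coord_subspace_def Basis_vec_def
    by (auto simp: cart_eq_inner_axis[symmetric] inner_axis axis_eq_axis)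
  moreover have "?B \<subseteq> Basis" by (auto simp: Basis_vec_def)
  moreover have "card ?B = card I"
    by (rule card_image) (auto simp: inj_on_def axis_eq_axis)
  ultimately show ?thesis by (simp add: dim_substandard)
qed

lemma unit_vector_in_subspace:
  fixes S :: "(real^'n) set"
  assumes "subspace S" "1 \<le> dim S"
  obtains v where "v \<in> S" "norm v = 1"
proof -
  obtain w where "w \<in> S" "w \<noteq> 0"
    using assms(2) dim_eq_0[of S] by fastforce
  with assms(1) show ?thesis
    by (intro that[of "w /\<^sub>R norm w"]) (simp_all add: subspace_scale)
qed

lemma bounded_quadratic_form_on_sphere:
  fixes A :: "real^'n^'n"
  obtains B where "\<And>v. norm v = 1 \<Longrightarrow> \<bar>(A *v v) \<bullet> v\<bar> \<le> B"
proof -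
  obtain B where B: "\<And>v. norm (A *v v) \<le> norm v * B"
    using bounded_linear.bounded[OF matrix_vector_mul_bounded_linear] by blast
  have "\<bar>(A *v v) \<bullet> v\<bar> \<le> B" if "norm v = 1" for v
    using Cauchy_Schwarz_ineq2[of "A *v v" v] B[of v] that by simp
  then show ?thesis by (rule that)
qed

lemma bdd_above_quadratic_form_on_sphere:
  fixes A :: "real^'n^'n"
  shows "bdd_above {(A *v v) \<bullet> v | v. v \<in> S \<and> norm v = 1}"
proof -
  obtain B where "\<And>v. norm v = 1 \<Longrightarrow> \<bar>(A *v v) \<bullet> v\<bar> \<le> B"
    using bounded_quadratic_form_on_sphere by blast
  then show ?thesis by (intro bdd_aboveI[of _ B]) (auto dest: abs_le_D1)
qed

lemma lambda_j_le:
  fixes A :: "real^'n^'n"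
  assumes "subspace S" "dim S = j" "1 \<le> j"
    and "\<And>v. v \<in> S \<Longrightarrow> (A *v v) \<bullet> v \<le> c * (v \<bullet> v)"
  shows "lambda_j j A \<le> c"
proof -
  let ?R = "\<lambda>S. {(A *v v) \<bullet> v | v. v \<in> S \<and> norm v = 1}"
  obtain B where B: "\<And>v. norm v = 1 \<Longrightarrow> \<bar>(A *v v) \<bullet> v\<bar> \<le> B"
    using bounded_quadratic_form_on_sphere by blast
  have "- B \<le> Sup (?R S')" if S': "subspace S'" "dim S' = j" for S'
  proof -
    obtain v where v: "v \<in> S'" "norm v = 1"
      using unit_vector_in_subspace[OF S'(1)] S'(2) assms(3) by auto
    then have "(A *v v) \<bullet> v \<le> Sup (?R S')"
      by (intro cSup_upper[OF _ bdd_above_quadratic_form_on_sphere]) blast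
    moreover have "- B \<le> (A *v v) \<bullet> v"
      using B[OF v(2)] by linarith
    ultimately show ?thesis by linarith
  qed
  then have bdd_sups: "bdd_below {Sup (?R S') | S'. subspace S' \<and> dim S' = j}"
    by (intro bdd_belowI[of _ "- B"]) blast
  have "lambda_j j A \<le> Sup (?R S)"
    unfolding lambda_j_def by (rule cInf_lower[OF _ bdd_sups]) (use assms in blast)
  also have "\<dots> \<le> c"
  proof (rule cSup_least)
    obtain v where "v \<in> S" "norm v = 1"
      using unit_vector_in_subspace[OF assms(1)] assms(2,3) by auto
    then show "?R S \<noteq> {}" by blast
  next
    fix x assume "x \<in> ?R S"
    then obtain v where "v \<in> S" "norm v = 1" "x = (A *v v) \<bullet> v" by blast
    then show "x \<le> c" using assms(4)[of v] by (simp add: norm_eq_1)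
  qed
  finally show ?thesis .
qed

lemma lambda_j_ge:
  fixes A :: "real^'n^'n"
  assumes "subspace V" "dim V = CARD('n) + 1 - j" "1 \<le> j" "j \<le> CARD('n)"
    and "\<And>v. v \<in> V \<Longrightarrow> c * (v \<bullet> v) \<le> (A *v v) \<bullet> v"
  shows "c \<le> lambda_j j A"
  unfolding lambda_j_def
proof (rule cInf_greatest)
  obtain I :: "'n set" where "card I = j"
    using assms(4) by (meson obtain_subset_with_card_n)
  then show "{Sup {(A *v v) \<bullet> v | v. v \<in> S \<and> norm v = 1} | S. subspace S \<and> dim S = j} \<noteq> {}"
    using subspace_coord_subspace dim_coord_subspace by blast
next
  fix x assume "x \<in> {Sup {(A *v v) \<bullet> v | v. v \<in> S \<and> norm v = 1} | S. subspace S \<and> dim S = j}"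
  then obtain S where S: "subspace S" "dim S = j"
    and x: "x = Sup {(A *v v) \<bullet> v | v. v \<in> S \<and> norm v = 1}" by blast
  \<comment> \<open>a \<open>j\<close>-dimensional and an \<open>(N+1-j)\<close>-dimensional subspace meet nontrivially\<close>
  have "dim {y + z | y z. y \<in> S \<and> z \<in> V} \<le> CARD('n)" by (rule dim_subset_UNIV_cart)
  then have "1 \<le> dim (S \<inter> V)"
    using dim_sums_Int[OF S(1) assms(1)] S(2) assms(2,4) by linarith
  then obtain v where v: "v \<in> S \<inter> V" "norm v = 1"
    using unit_vector_in_subspace subspace_inter[OF S(1) assms(1)] by blast
  have "c \<le> (A *v v) \<bullet> v" using assms(5)[of v] v by (simp add: norm_eq_1)
  also have "\<dots> \<le> x" unfolding x
    by (rule cSup_upper[OF _ bdd_above_quadratic_form_on_sphere]) (use v in blast)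
  finally show "c \<le> x" .
qed

definition diag_mat :: "('n \<Rightarrow> real) \<Rightarrow> real^'n^'n" where
  "diag_mat d = (\<chi> i k. if i = k then d i else 0)"

lemma diag_mat_mult_nth [simp]: "(diag_mat d *v h) $ k = d k * h $ k"
proof -
  have "(diag_mat d *v h) $ k = (\<Sum>i\<in>UNIV. (if k = i then d k else 0) * h $ i)"
    by (simp add: diag_mat_def matrix_vector_mult_def)
  also have "\<dots> = (\<Sum>i\<in>UNIV. if k = i then d k * h $ k else 0)"
    by (rule sum.cong) auto
  finally show ?thesis by simp
qed

lemma diag_mat_add: "diag_mat d + diag_mat e = diag_mat (\<lambda>i. d i + e i)"
  by (simp add: diag_mat_def vec_eq_iff)

lemma quadratic_form_diag_mat: "(diag_mat d *v v) \<bullet> v = (\<Sum>i\<in>UNIV. d i * (v $ i)\<^sup>2)"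
  by (simp add: inner_vec_def power2_eq_square algebra_simps)

lemma scaled_inner_self_vec: "c * (v \<bullet> v) = (\<Sum>i\<in>UNIV. c * (v $ i)\<^sup>2)"
  by (simp add: inner_vec_def power2_eq_square sum_distrib_left)

lemma lambda_j_diag_mat_le:
  fixes d :: "'n::finite \<Rightarrow> real"
  assumes "card I = j" "1 \<le> j" "\<And>i. i \<in> I \<Longrightarrow> d i \<le> c"
  shows "lambda_j j (diag_mat d) \<le> c"
proof (rule lambda_j_le[OF subspace_coord_subspace])
  show "dim (coord_subspace I) = j" by (simp add: dim_coord_subspace assms(1))
  fix v :: "real^'n" assume v: "v \<in> coord_subspace I"
  have "d i * (v $ i)\<^sup>2 \<le> c * (v $ i)\<^sup>2" for i
    using assms(3)[of i] v by (cases "i \<in> I") (auto simp: coord_subspace_def intro: mult_right_mono)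
  then have "(\<Sum>i\<in>UNIV. d i * (v $ i)\<^sup>2) \<le> (\<Sum>i\<in>UNIV. c * (v $ i)\<^sup>2)"
    by (rule sum_mono)
  then show "(diag_mat d *v v) \<bullet> v \<le> c * (v \<bullet> v)"
    by (simp only: quadratic_form_diag_mat scaled_inner_self_vec)
qed (use assms in auto)

lemma lambda_j_diag_mat_ge:
  fixes d :: "'n::finite \<Rightarrow> real"
  assumes "card I = CARD('n) + 1 - j" "1 \<le> j" "j \<le> CARD('n)" "\<And>i. i \<in> I \<Longrightarrow> c \<le> d i"
  shows "c \<le> lambda_j j (diag_mat d)"
proof (rule lambda_j_ge[OF subspace_coord_subspace])
  show "dim (coord_subspace I) = CARD('n) + 1 - j" by (simp add: dim_coord_subspace assms(1))
  fix v :: "real^'n" assume v: "v \<in> coord_subspace I"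
  have "c * (v $ i)\<^sup>2 \<le> d i * (v $ i)\<^sup>2" for i
    using assms(4)[of i] v by (cases "i \<in> I") (auto simp: coord_subspace_def intro: mult_right_mono)
  then have "(\<Sum>i\<in>UNIV. c * (v $ i)\<^sup>2) \<le> (\<Sum>i\<in>UNIV. d i * (v $ i)\<^sup>2)"
    by (rule sum_mono)
  then show "c * (v \<bullet> v) \<le> (diag_mat d *v v) \<bullet> v"
    by (simp only: quadratic_form_diag_mat scaled_inner_self_vec)
qed (use assms in auto)

section \<open>Test functions\<close>

lemmas has_derivative_vec_nth [derivative_intros] =
  bounded_linear.has_derivative[OF bounded_linear_vec_nth]

definition diag_quad :: "('n \<Rightarrow> real) \<Rightarrow> real^'n \<Rightarrow> real^'n \<Rightarrow> real" where
  "diag_quad c x0 x = (\<Sum>i\<in>UNIV. c i * (x $ i - x0 $ i)\<^sup>2)"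

lemma diag_quad_center [simp]: "diag_quad c x0 x0 = 0"
  by (simp add: diag_quad_def)

lemma diag_quad_add: "diag_quad (\<lambda>i. c i + d i) x0 x = diag_quad c x0 x + diag_quad d x0 x"
  by (simp add: diag_quad_def sum.distrib distrib_right)

lemma diag_quad_diff: "diag_quad (\<lambda>i. c i - d i) x0 x = diag_quad c x0 x - diag_quad d x0 x"
  by (simp add: diag_quad_def sum_subtractf left_diff_distrib)

lemma diag_quad_const: "diag_quad (\<lambda>i. k) x0 x = k * (norm (x - x0))\<^sup>2"
  unfolding power2_norm_eq_inner
  by (simp add: diag_quad_def inner_vec_def sum_distrib_left power2_eq_square)

lemma diag_quad_nonneg: "(\<And>i. 0 \<le> c i) \<Longrightarrow> 0 \<le> diag_quad c x0 x"
  by (simp add: diag_quad_def sum_nonneg)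

lemma continuous_on_diag_quad [continuous_intros]: "continuous_on S (diag_quad c x0)"
  unfolding diag_quad_def by (intro continuous_intros)

lemma has_derivative_diag_quad:
  "(diag_quad c x0 has_derivative (\<lambda>h. (diag_mat (\<lambda>i. 2 * c i) *v (x - x0)) \<bullet> h)) (at x)"
  unfolding diag_quad_def
  by (auto intro!: derivative_eq_intros ext simp: inner_vec_def algebra_simps)

lemma has_derivative_diag_quad_grad:
  "((\<lambda>y. diag_mat d *v (y - x0)) has_derivative (\<lambda>h. diag_mat d *v h)) (at x)"
  by (auto intro!: derivative_eq_intros bounded_linear.has_derivative[OF matrix_vector_mul_bounded_linear])

lemma C21_with_add:
  assumes "C21_with \<phi>1 G1 H1 T1" "C21_with \<phi>2 G2 H2 T2"
  shows "C21_with (\<lambda>x t. \<phi>1 x t + \<phi>2 x t) (\<lambda>x t. G1 x t + G2 x t) (\<lambda>x t. H1 x t + H2 x t)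
    (\<lambda>x t. T1 x t + T2 x t)"
  unfolding C21_with_def
proof (intro conjI allI)
  fix x t
  have "((\<lambda>y. \<phi>1 y t) has_derivative (\<lambda>h. G1 x t \<bullet> h)) (at x)"
    "((\<lambda>y. \<phi>2 y t) has_derivative (\<lambda>h. G2 x t \<bullet> h)) (at x)"
    using assms unfolding C21_with_def by blast+
  from has_derivative_add[OF this]
  show "((\<lambda>y. \<phi>1 y t + \<phi>2 y t) has_derivative (\<lambda>h. (G1 x t + G2 x t) \<bullet> h)) (at x)"
    by (simp add: inner_add_left)
  have "((\<lambda>y. G1 y t) has_derivative (\<lambda>h. H1 x t *v h)) (at x)"
    "((\<lambda>y. G2 y t) has_derivative (\<lambda>h. H2 x t *v h)) (at x)"
    using assms unfolding C21_with_def by blast+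
  from has_derivative_add[OF this]
  show "((\<lambda>y. G1 y t + G2 y t) has_derivative (\<lambda>h. (H1 x t + H2 x t) *v h)) (at x)"
    by (simp add: matrix_vector_mult_add_rdistrib)
  show "((\<lambda>s. \<phi>1 x s + \<phi>2 x s) has_real_derivative T1 x t + T2 x t) (at t)"
    using assms unfolding C21_with_def by (blast intro: DERIV_add)
qed (use assms in \<open>auto simp: C21_with_def case_prod_beta intro: continuous_on_add\<close>)

lemma C21_with_diag_quad:
  "C21_with (\<lambda>x t. diag_quad c x0 x) (\<lambda>x t. diag_mat (\<lambda>i. 2 * c i) *v (x - x0))
    (\<lambda>x t. diag_mat (\<lambda>i. 2 * c i)) (\<lambda>x t. 0)"
  unfolding C21_with_def case_prod_beta
  by (auto intro!: has_derivative_diag_quad has_derivative_diag_quad_grad continuous_intros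
      continuous_on_compose2[OF continuous_on_diag_quad]
      bounded_linear.continuous_on[OF matrix_vector_mul_bounded_linear])

lemma continuous_on_comp_vec_nth_fst:
  "continuous_on UNIV h \<Longrightarrow> continuous_on UNIV (\<lambda>p::(real^'n) \<times> 'a::topological_space. h (fst p $ m))"
  by (rule continuous_on_compose2) (auto intro!: continuous_intros)

lemma continuous_on_comp_snd:
  "continuous_on UNIV h \<Longrightarrow> continuous_on UNIV (\<lambda>p::'a::topological_space \<times> real. h (snd p))"
  by (rule continuous_on_compose2) (auto intro!: continuous_intros)

lemma C21_with_time:
  assumes "\<And>t. (f has_real_derivative f' t) (at t)" "continuous_on UNIV f'"
  shows "C21_with (\<lambda>x t. f t) (\<lambda>x t. 0) (\<lambda>x t. 0) (\<lambda>x t. f' t)"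
proof -
  have "continuous_on UNIV f"
    using assms(1) by (rule DERIV_continuous_on)
  then show ?thesis
    using assms unfolding C21_with_def case_prod_beta
    by (auto intro!: continuous_on_comp_snd has_derivative_eq_rhs[OF has_derivative_const])
qed

lemma C21_with_add_time:
  assumes "C21_with \<psi> G H T" "\<And>t. (f has_real_derivative f' t) (at t)" "continuous_on UNIV f'"
  shows "C21_with (\<lambda>x t. \<psi> x t + f t) G H (\<lambda>x t. T x t + f' t)"
  using C21_with_add[OF assms(1) C21_with_time[OF assms(2,3)]] by simp

lemma has_derivative_comp_vec_nth:
  assumes "(h has_real_derivative h') (at (x $ i))"
  shows "((\<lambda>y. h (y $ i)) has_derivative (\<lambda>v. h' * v $ i)) (at x)"
  using has_derivative_compose[OF has_derivative_vec_nth[OF has_derivative_ident]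
      assms[unfolded has_field_derivative_def]]
  by (simp add: mult.commute)

lemma C21_with_separable:
  fixes i :: "'n::finite"
  assumes g: "\<And>s. (g has_real_derivative g' s) (at s)" "\<And>s. (g' has_real_derivative g'' s) (at s)"
    and f: "\<And>t. (f has_real_derivative f' t) (at t)"
    and cont: "continuous_on UNIV g''" "continuous_on UNIV f'"
  shows "C21_with (\<lambda>x t. f t * g (x $ i)) (\<lambda>x t. (f t * g' (x $ i)) *\<^sub>R axis i 1)
    (\<lambda>x t. diag_mat (\<lambda>k. if k = i then f t * g'' (x $ i) else 0)) (\<lambda>x t. f' t * g (x $ i))"
proof -
  have cont_fg: "continuous_on UNIV f" "continuous_on UNIV g" "continuous_on UNIV g'"
    using f g by (auto intro: DERIV_continuous_on)
  have cont_hessian: "continuous_on UNIV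
      (\<lambda>p::(real^'n) \<times> real. diag_mat (\<lambda>k. if k = i then f (snd p) * g'' (fst p $ i) else 0))"
    unfolding diag_mat_def
  proof (intro continuous_on_vec_lambda)
    fix k l
    show "continuous_on UNIV (\<lambda>p. if k = l then if k = i then f (snd p) * g'' (fst p $ i) else 0 else 0)"
      by (cases "k = l"; cases "k = i")
        (auto intro!: continuous_intros continuous_on_comp_vec_nth_fst continuous_on_comp_snd cont cont_fg)
  qed
  show ?thesis
    unfolding C21_with_def case_prod_beta
  proof (intro conjI allI)
    fix x t
    show "((\<lambda>y. f t * g (y $ i)) has_derivative (\<lambda>h. ((f t * g' (x $ i)) *\<^sub>R axis i 1) \<bullet> h)) (at x)"
      using has_derivative_mult_right[OF has_derivative_comp_vec_nth[OF g(1)], of "f t"]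
      by (simp add: inner_axis' mult.assoc)
    have "((\<lambda>y. (f t * g' (y $ i)) *\<^sub>R axis i (1::real)) has_derivative
        (\<lambda>h. (f t * (g'' (x $ i) * h $ i)) *\<^sub>R axis i 1)) (at x)"
      by (intro has_derivative_scaleR_left has_derivative_mult_right has_derivative_comp_vec_nth g(2))
    moreover have "(f t * (g'' (x $ i) * h $ i)) *\<^sub>R axis i 1
        = diag_mat (\<lambda>k. if k = i then f t * g'' (x $ i) else 0) *v h" for h :: "real^'n"
      by (simp add: vec_eq_iff axis_def)
    ultimately show "((\<lambda>y. (f t * g' (y $ i)) *\<^sub>R axis i 1) has_derivative
        (\<lambda>h. diag_mat (\<lambda>k. if k = i then f t * g'' (x $ i) else 0) *v h)) (at x)"
      by simp
    show "((\<lambda>s. f s * g (x $ i)) has_real_derivative f' t * g (x $ i)) (at t)"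
      by (rule DERIV_cmult_right[OF f])
  qed (auto intro!: continuous_intros continuous_on_comp_vec_nth_fst continuous_on_comp_snd
      cont cont_fg cont_hessian)
qed

lemma C2_with_diag_quad:
  "C2_with (\<lambda>x. diag_quad c x0 x + \<alpha>) (\<lambda>x. diag_mat (\<lambda>i. 2 * c i) *v (x - x0))
    (\<lambda>x. diag_mat (\<lambda>i. 2 * c i))"
  unfolding C2_with_def
  by (auto intro!: has_derivative_add_const has_derivative_diag_quad has_derivative_diag_quad_grad)

section \<open>Comparison with strict sub- and supersolutions\<close>

lemma C2_with_continuous: "C2_with \<phi> G H \<Longrightarrow> continuous_on UNIV \<phi>"
  unfolding C2_with_def
  by (meson differentiable_def differentiable_imp_continuous_on differentiable_on_def)

lemma visc_sub_ell_le_strict_supersolution: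
  fixes \<Omega> :: "(real^'n) set"
  assumes "bounded \<Omega>" "continuous_on (closure \<Omega>) z" "visc_sub_ell j \<Omega> z"
    and W: "C2_with W G H" "\<And>x. x \<in> \<Omega> \<Longrightarrow> lambda_j j (H x) < 0"
    and bdry: "\<And>x. x \<in> frontier \<Omega> \<Longrightarrow> z x \<le> W x"
    and x: "x \<in> closure \<Omega>"
  shows "z x \<le> W x"
proof -
  have "continuous_on (closure \<Omega>) (\<lambda>y. z y - W y)"
    using assms(2) C2_with_continuous[OF W(1)] by (auto intro: continuous_on_diff continuous_on_subset)
  moreover have "compact (closure \<Omega>)" "closure \<Omega> \<noteq> {}"
    using assms(1) x by (auto simp: compact_closure)
  ultimately obtain p where p: "p \<in> closure \<Omega>" and max: "\<forall>y\<in>closure \<Omega>. z y - W y \<le> z p - W p"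
    using continuous_attains_sup by blast
  have "p \<notin> \<Omega>"
  proof
    assume "p \<in> \<Omega>"
    moreover have "\<exists>e>0. \<forall>y\<in>\<Omega>. dist y p < e \<longrightarrow> z y - W y \<le> z p - W p"
      using max closure_subset by (intro exI[of _ 1]) auto
    ultimately have "0 \<le> lambda_j j (H p)"
      using assms(3) W(1) unfolding visc_sub_ell_def by blast
    with W(2)[OF \<open>p \<in> \<Omega>\<close>] show False by simp
  qed
  then have "p \<in> frontier \<Omega>" using p closure_Un_frontier by blast
  then show ?thesis using max x bdry[of p] by fastforce
qed

lemma visc_super_ell_ge_strict_subsolution:
  fixes \<Omega> :: "(real^'n) set"
  assumes "bounded \<Omega>" "continuous_on (closure \<Omega>) z" "visc_super_ell j \<Omega> z"
    and W: "C2_with W G H" "\<And>x. x \<in> \<Omega> \<Longrightarrow> 0 < lambda_j j (H x)"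
    and bdry: "\<And>x. x \<in> frontier \<Omega> \<Longrightarrow> W x \<le> z x"
    and x: "x \<in> closure \<Omega>"
  shows "W x \<le> z x"
proof -
  have "continuous_on (closure \<Omega>) (\<lambda>y. z y - W y)"
    using assms(2) C2_with_continuous[OF W(1)] by (auto intro: continuous_on_diff continuous_on_subset)
  moreover have "compact (closure \<Omega>)" "closure \<Omega> \<noteq> {}"
    using assms(1) x by (auto simp: compact_closure)
  ultimately obtain p where p: "p \<in> closure \<Omega>" and min: "\<forall>y\<in>closure \<Omega>. z p - W p \<le> z y - W y"
    using continuous_attains_inf by blast
  have "p \<notin> \<Omega>"
  proof
    assume "p \<in> \<Omega>"
    moreover have "\<exists>e>0. \<forall>y\<in>\<Omega>. dist y p < e \<longrightarrow> z p - W p \<le> z y - W y"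
      using min closure_subset by (intro exI[of _ 1]) auto
    ultimately have "lambda_j j (H p) \<le> 0"
      using assms(3) W(1) unfolding visc_super_ell_def by blast
    with W(2)[OF \<open>p \<in> \<Omega>\<close>] show False by simp
  qed
  then have "p \<in> frontier \<Omega>" using p closure_Un_frontier by blast
  then show ?thesis using min x bdry[of p] by fastforce
qed

lemma exp_penalty:
  fixes a M t :: real
  assumes "0 < a"
  obtains \<beta> l where "0 < \<beta>" "0 < l" "\<beta> * exp (l * t) = a" "M < \<beta> * exp (l * (t + 1))"
proof
  define l where "l = (\<bar>M\<bar> + 1) / a"
  show "0 < a * exp (- l * t)" "0 < l" using assms by (simp_all add: l_def)
  show "a * exp (- l * t) * exp (l * t) = a" by (simp flip: exp_add)
  have "a * (1 + l) = a + \<bar>M\<bar> + 1" using assms by (simp add: l_def field_simps)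
  then have "M < a * (1 + l)" using assms by linarith
  also have "\<dots> \<le> a * exp l" using assms exp_ge_add_one_self[of l] by simp
  also have "\<dots> = a * exp (- l * t) * exp (l * (t + 1))" by (simp add: algebra_simps flip: exp_add)
  finally show "M < a * exp (- l * t) * exp (l * (t + 1))" .
qed

lemma interior_min_imp_local_min:
  fixes v :: "'a::metric_space \<Rightarrow> real \<Rightarrow> 'b::linorder"
  assumes "open Op" "Op \<subseteq> K" "p \<in> Op" "0 < s" "s < T"
    and min: "\<And>y r. y \<in> K \<Longrightarrow> 0 \<le> r \<Longrightarrow> r \<le> T \<Longrightarrow> v p s \<le> v y r"
  obtains e where "0 < e" "\<And>y r. dist y p < e \<Longrightarrow> \<bar>r - s\<bar> < e \<Longrightarrow> v p s \<le> v y r"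
proof -
  obtain e1 where e1: "0 < e1" "ball p e1 \<subseteq> Op" using assms(1,3) open_contains_ball by blast
  show ?thesis
  proof (rule that[of "min e1 (min s (T - s))"])
    show "0 < min e1 (min s (T - s))" using e1 assms(4,5) by simp
    fix y r assume "dist y p < min e1 (min s (T - s))" "\<bar>r - s\<bar> < min e1 (min s (T - s))"
    then have "y \<in> K" "0 \<le> r" "r \<le> T"
      using e1 assms(2) by (auto simp: dist_commute abs_less_iff subset_iff)
    then show "v p s \<le> v y r" by (rule min)
  qed
qed

lemma exp_penalized_local_min:
  fixes w :: "'a::metric_space \<Rightarrow> real \<Rightarrow> real"
  assumes K: "compact K" "open Op" "Op \<subseteq> K"
    and wc: "continuous_on (K \<times> {0..}) (\<lambda>(x, t). w x t)"
    and init: "\<And>x. x \<in> K \<Longrightarrow> 0 \<le> w x 0"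
    and lateral: "\<And>x t. x \<in> K - Op \<Longrightarrow> 0 < t \<Longrightarrow> 0 \<le> w x t"
    and neg: "x1 \<in> K" "0 \<le> t1" "w x1 t1 < 0"
  obtains p s \<beta> l e where "p \<in> Op" "0 < s" "0 < \<beta>" "0 < l" "0 < e"
    "\<And>y r. dist y p < e \<Longrightarrow> \<bar>r - s\<bar> < e \<Longrightarrow> w p s + \<beta> * exp (l * s) \<le> w y r + \<beta> * exp (l * r)"
proof -
  define T where "T = t1 + 1"
  have box: "compact (K \<times> {0..T})" "K \<times> {0..T} \<noteq> {}"
    using K neg by (auto simp: T_def intro!: compact_Times)
  have wc_box: "continuous_on (K \<times> {0..T}) (\<lambda>(x, t). w x t)"
    by (rule continuous_on_subset[OF wc]) auto
  obtain q where qmin: "\<forall>y\<in>K \<times> {0..T}. (\<lambda>(x, t). w x t) q \<le> (\<lambda>(x, t). w x t) y"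
    using continuous_attains_inf[OF box wc_box] by blast
  define m where "m = (\<lambda>(x, t). w x t) q"
  have m: "m \<le> w x t" if "x \<in> K" "0 \<le> t" "t \<le> T" for x t
    using qmin that unfolding m_def by fastforce
  \<comment> \<open>keeps \<open>v x1 t1 < 0\<close> while forcing \<open>v > 0\<close> at time \<open>T\<close>\<close>
  obtain \<beta> l where \<beta>: "0 < \<beta>" and l: "0 < l"
    and at_t1: "\<beta> * exp (l * t1) = - w x1 t1 / 2" and at_T: "- m < \<beta> * exp (l * T)"
    using exp_penalty[where a = "- w x1 t1 / 2" and M = "- m" and t = t1] neg(3) unfolding T_def by auto
  define v where "v = (\<lambda>x t. w x t + \<beta> * exp (l * t))"
  have penalty_pos: "0 < \<beta> * exp (l * t)" for t using \<beta> by simp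
  have vc: "continuous_on (K \<times> {0..T}) (\<lambda>(x, t). v x t)"
    using wc_box unfolding v_def case_prod_beta by (intro continuous_intros)
  obtain p s where "(p, s) \<in> K \<times> {0..T}" and pmin: "\<forall>y\<in>K \<times> {0..T}. v p s \<le> (\<lambda>(x, t). v x t) y"
    using continuous_attains_inf[OF box vc] by fastforce
  then have ps: "p \<in> K" "0 \<le> s" "s \<le> T" by auto
  have vmin: "v p s \<le> v y r" if "y \<in> K" "0 \<le> r" "r \<le> T" for y r
    using pmin that by fastforce
  have "v p s \<le> v x1 t1" using vmin neg by (simp add: T_def)
  also have "v x1 t1 < 0" using neg(3) by (simp add: v_def at_t1)
  finally have vneg: "v p s < 0" .
  have "s \<noteq> 0" using vneg init[OF ps(1)] penalty_pos[of 0] by (auto simp: v_def)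
  moreover have "s \<noteq> T"
  proof
    assume "s = T"
    have "m \<le> w p T" using m[OF ps(1)] neg(2) by (simp add: T_def)
    with vneg at_T \<open>s = T\<close> show False by (simp add: v_def)
  qed
  moreover have "p \<in> Op"
  proof (rule ccontr)
    assume "p \<notin> Op"
    then have "0 \<le> w p s" using lateral ps \<open>s \<noteq> 0\<close> by simp
    then show False using vneg penalty_pos[of s] by (simp add: v_def)
  qed
  ultimately have s: "0 < s" "s < T" using ps by auto
  obtain e where e: "0 < e" and local_min: "\<And>y r. dist y p < e \<Longrightarrow> \<bar>r - s\<bar> < e \<Longrightarrow> v p s \<le> v y r"
    using interior_min_imp_local_min[where v = v, OF K(2,3) \<open>p \<in> Op\<close> s vmin] by blast
  show ?thesis
    by (rule that[OF \<open>p \<in> Op\<close> s(1) \<beta> l e]) (use local_min in \<open>simp add: v_def\<close>)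
qed

lemma visc_super_par_ge_strict_subsolution:
  fixes \<Omega> K Op :: "(real^'n) set"
  assumes u: "visc_super_par j \<Omega> u" "continuous_on (closure \<Omega> \<times> {0..}) (\<lambda>(x, t). u x t)"
    and K: "compact K" "K \<subseteq> closure \<Omega>" "open Op" "Op \<subseteq> K" "Op \<subseteq> \<Omega>"
    and \<psi>: "C21_with \<psi> G H T" "\<And>x t. x \<in> Op \<Longrightarrow> 0 < t \<Longrightarrow> T x t \<le> lambda_j j (H x t)"
    and lateral: "\<And>x t. x \<in> K - Op \<Longrightarrow> 0 < t \<Longrightarrow> \<psi> x t \<le> u x t"
    and init: "\<And>x. x \<in> K \<Longrightarrow> \<psi> x 0 \<le> u x 0"
    and x: "x \<in> K" "0 \<le> t"
  shows "\<psi> x t \<le> u x t"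
proof (rule ccontr)
  assume "\<not> \<psi> x t \<le> u x t"
  have "continuous_on (K \<times> {0..}) (\<lambda>(x, t). u x t)"
    by (rule continuous_on_subset[OF u(2)]) (use K in auto)
  moreover have "continuous_on (K \<times> {0..}) (\<lambda>(x, t). \<psi> x t)"
    using \<psi>(1) unfolding C21_with_def by (blast intro: continuous_on_subset)
  ultimately have "continuous_on (K \<times> {0..}) (\<lambda>(x, t). u x t - \<psi> x t)"
    by (simp add: case_prod_beta continuous_on_diff)
  moreover have "0 \<le> u y 0 - \<psi> y 0" if "y \<in> K" for y using init[OF that] by simp
  moreover have "0 \<le> u y r - \<psi> y r" if "y \<in> K - Op" "0 < r" for y r using lateral[OF that] by simp
  moreover have "u x t - \<psi> x t < 0" using \<open>\<not> \<psi> x t \<le> u x t\<close> by simp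
  ultimately obtain p s \<beta> l e where ps: "p \<in> Op" "0 < s" "0 < \<beta>" "0 < l" "0 < e"
    and touch: "\<And>y r. dist y p < e \<Longrightarrow> \<bar>r - s\<bar> < e \<Longrightarrow>
      u p s - \<psi> p s + \<beta> * exp (l * s) \<le> u y r - \<psi> y r + \<beta> * exp (l * r)"
    using exp_penalized_local_min[OF K(1,3,4), of "\<lambda>x t. u x t - \<psi> x t" x t] x by blast
  have "C21_with (\<lambda>y r. \<psi> y r + - \<beta> * exp (l * r)) G H (\<lambda>y r. T y r + - \<beta> * (l * exp (l * r)))"
    by (rule C21_with_add_time[OF \<psi>(1)]) (auto intro!: derivative_eq_intros continuous_intros)
  moreover have "\<exists>e>0. \<forall>y\<in>\<Omega>. \<forall>r>0. dist y p < e \<and> \<bar>r - s\<bar> < e \<longrightarrow>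
      u p s - (\<psi> p s + - \<beta> * exp (l * s)) \<le> u y r - (\<psi> y r + - \<beta> * exp (l * r))"
    using touch ps(5) by (intro exI[of _ e]) (auto simp: algebra_simps)
  ultimately have "0 \<le> T p s + - \<beta> * (l * exp (l * s)) - lambda_j j (H p s)"
    using u(1) ps(1,2) K(5) unfolding visc_super_par_def by blast
  moreover have "0 < \<beta> * (l * exp (l * s))" using ps by simp
  ultimately show False using \<psi>(2)[OF ps(1,2)] by linarith
qed

lemma visc_sub_par_le_strict_supersolution:
  fixes \<Omega> K Op :: "(real^'n) set"
  assumes u: "visc_sub_par j \<Omega> u" "continuous_on (closure \<Omega> \<times> {0..}) (\<lambda>(x, t). u x t)"
    and K: "compact K" "K \<subseteq> closure \<Omega>" "open Op" "Op \<subseteq> K" "Op \<subseteq> \<Omega>"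
    and \<psi>: "C21_with \<psi> G H T" "\<And>x t. x \<in> Op \<Longrightarrow> 0 < t \<Longrightarrow> lambda_j j (H x t) \<le> T x t"
    and lateral: "\<And>x t. x \<in> K - Op \<Longrightarrow> 0 < t \<Longrightarrow> u x t \<le> \<psi> x t"
    and init: "\<And>x. x \<in> K \<Longrightarrow> u x 0 \<le> \<psi> x 0"
    and x: "x \<in> K" "0 \<le> t"
  shows "u x t \<le> \<psi> x t"
proof (rule ccontr)
  assume "\<not> u x t \<le> \<psi> x t"
  have "continuous_on (K \<times> {0..}) (\<lambda>(x, t). u x t)"
    by (rule continuous_on_subset[OF u(2)]) (use K in auto)
  moreover have "continuous_on (K \<times> {0..}) (\<lambda>(x, t). \<psi> x t)"
    using \<psi>(1) unfolding C21_with_def by (blast intro: continuous_on_subset)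
  ultimately have "continuous_on (K \<times> {0..}) (\<lambda>(x, t). \<psi> x t - u x t)"
    by (simp add: case_prod_beta continuous_on_diff)
  moreover have "0 \<le> \<psi> y 0 - u y 0" if "y \<in> K" for y using init[OF that] by simp
  moreover have "0 \<le> \<psi> y r - u y r" if "y \<in> K - Op" "0 < r" for y r using lateral[OF that] by simp
  moreover have "\<psi> x t - u x t < 0" using \<open>\<not> u x t \<le> \<psi> x t\<close> by simp
  ultimately obtain p s \<beta> l e where ps: "p \<in> Op" "0 < s" "0 < \<beta>" "0 < l" "0 < e"
    and touch: "\<And>y r. dist y p < e \<Longrightarrow> \<bar>r - s\<bar> < e \<Longrightarrow>
      \<psi> p s - u p s + \<beta> * exp (l * s) \<le> \<psi> y r - u y r + \<beta> * exp (l * r)"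
    using exp_penalized_local_min[OF K(1,3,4), of "\<lambda>x t. \<psi> x t - u x t" x t] x by blast
  have "C21_with (\<lambda>y r. \<psi> y r + \<beta> * exp (l * r)) G H (\<lambda>y r. T y r + \<beta> * (l * exp (l * r)))"
    by (rule C21_with_add_time[OF \<psi>(1)]) (auto intro!: derivative_eq_intros continuous_intros)
  moreover have "\<exists>e>0. \<forall>y\<in>\<Omega>. \<forall>r>0. dist y p < e \<and> \<bar>r - s\<bar> < e \<longrightarrow>
      u y r - (\<psi> y r + \<beta> * exp (l * r)) \<le> u p s - (\<psi> p s + \<beta> * exp (l * s))"
    using touch ps(5) by (intro exI[of _ e]) (auto simp: algebra_simps)
  ultimately have "T p s + \<beta> * (l * exp (l * s)) - lambda_j j (H p s) \<le> 0"
    using u(1) ps(1,2) K(5) unfolding visc_sub_par_def by blast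
  moreover have "0 < \<beta> * (l * exp (l * s))" using ps by simp
  ultimately show False using \<psi>(2)[OF ps(1,2)] by linarith
qed

lemma parabolic_solution_at_zero:
  assumes u: "parabolic_solution j \<Omega> g u0 u" and compat: "\<And>x. x \<in> frontier \<Omega> \<Longrightarrow> u0 x = g x"
    and x: "x \<in> closure \<Omega>"
  shows "u x 0 = u0 x"
proof (cases "x \<in> \<Omega>")
  case True
  then show ?thesis using u by (simp add: parabolic_solution_def)
next
  case False
  then have "x \<in> frontier \<Omega>" using x closure_Un_frontier by blast
  have "continuous_on (closure \<Omega> \<times> {0..}) (\<lambda>(x, t). u x t)"
    using u by (simp add: parabolic_solution_def)
  then have "continuous_on {0..} (\<lambda>t. (\<lambda>(x, t). u x t) (x, t))"
    by (rule continuous_on_compose2) (use x in \<open>auto intro!: continuous_intros\<close>)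
  then have "((\<lambda>t. u x t) \<longlongrightarrow> u x 0) (at_right 0)"
    unfolding continuous_on_def by (auto intro: tendsto_within_subset[of _ _ _ "{0..}"])
  moreover have "\<forall>\<^sub>F t in at_right 0. u x t = g x"
    using u \<open>x \<in> frontier \<Omega>\<close> unfolding parabolic_solution_def eventually_at_right_field
    by (intro exI[of _ 1]) auto
  then have "((\<lambda>t. u x t) \<longlongrightarrow> g x) (at_right 0)"
    by (rule tendsto_eventually)
  ultimately have "u x 0 = g x" by (rule tendsto_unique[rotated]) simp
  then show ?thesis using compat[OF \<open>x \<in> frontier \<Omega>\<close>] by simp
qed

section \<open>Comparison with diagonal quadratics\<close>

lemma bounded_sq_dist_bound:
  fixes x0 :: "'a::real_normed_vector"
  assumes "bounded S"
  obtains R where "0 < R" "\<And>y. y \<in> S \<Longrightarrow> (norm (y - x0))\<^sup>2 \<le> R"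
proof -
  obtain b where "\<forall>y\<in>S. dist x0 y \<le> b"
    using bounded_any_center assms by blast
  then show ?thesis
    by (intro that[of "(max 1 b)\<^sup>2"]) (auto intro!: power_mono simp: dist_norm norm_minus_commute)
qed

lemma visc_sub_ell_le_diag_quad:
  fixes c :: "'n::finite \<Rightarrow> real" and \<Omega> :: "(real^'n) set"
  assumes z: "bounded \<Omega>" "continuous_on (closure \<Omega>) z" "visc_sub_ell j \<Omega> z"
    and bdry: "\<And>x. x \<in> frontier \<Omega> \<Longrightarrow> z x \<le> diag_quad c x0 x"
    and I: "card I = j" "1 \<le> j" "\<And>i. i \<in> I \<Longrightarrow> c i \<le> 0"
    and x: "x \<in> closure \<Omega>"
  shows "z x \<le> diag_quad c x0 x"
proof (rule field_le_epsilon)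
  fix e :: real assume "0 < e"
  obtain R where R: "0 < R" "\<And>y. y \<in> closure \<Omega> \<Longrightarrow> (norm (y - x0))\<^sup>2 \<le> R"
    using bounded_sq_dist_bound bounded_closure z(1) by blast
  define \<epsilon> where "\<epsilon> = e / R"
  have \<epsilon>: "0 < \<epsilon>" "\<epsilon> * R = e" using \<open>0 < e\<close> R(1) by (simp_all add: \<epsilon>_def)
  have W: "diag_quad (\<lambda>i. c i - \<epsilon>) x0 y + e = diag_quad c x0 y + (e - \<epsilon> * (norm (y - x0))\<^sup>2)" for y
    by (simp add: diag_quad_diff diag_quad_const)
  have "z x \<le> diag_quad (\<lambda>i. c i - \<epsilon>) x0 x + e"
  proof (rule visc_sub_ell_le_strict_supersolution[OF z C2_with_diag_quad _ _ x])
    have "lambda_j j (diag_mat (\<lambda>i. 2 * (c i - \<epsilon>))) \<le> - 2 * \<epsilon>"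
      by (rule lambda_j_diag_mat_le[OF I(1,2)]) (simp add: I(3))
    then show "lambda_j j (diag_mat (\<lambda>i. 2 * (c i - \<epsilon>))) < 0" for y using \<epsilon> by linarith
    fix y assume "y \<in> frontier \<Omega>"
    then have "\<epsilon> * (norm (y - x0))\<^sup>2 \<le> \<epsilon> * R"
      using R(2)[of y] \<epsilon>(1) by (simp add: frontier_def)
    then have "\<epsilon> * (norm (y - x0))\<^sup>2 \<le> e" using \<epsilon>(2) by simp
    then show "z y \<le> diag_quad (\<lambda>i. c i - \<epsilon>) x0 y + e" using bdry[OF \<open>y \<in> frontier \<Omega>\<close>] W by simp
  qed
  moreover have "0 \<le> \<epsilon> * (norm (x - x0))\<^sup>2" using \<epsilon>(1) by simp
  ultimately show "z x \<le> diag_quad c x0 x + e" using W[of x] by linarith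
qed

lemma visc_super_ell_ge_diag_quad:
  fixes c :: "'n::finite \<Rightarrow> real" and \<Omega> :: "(real^'n) set"
  assumes z: "bounded \<Omega>" "continuous_on (closure \<Omega>) z" "visc_super_ell j \<Omega> z"
    and bdry: "\<And>x. x \<in> frontier \<Omega> \<Longrightarrow> diag_quad c x0 x \<le> z x"
    and I: "card I = CARD('n) + 1 - j" "1 \<le> j" "j \<le> CARD('n)" "\<And>i. i \<in> I \<Longrightarrow> 0 \<le> c i"
    and x: "x \<in> closure \<Omega>"
  shows "diag_quad c x0 x \<le> z x"
proof (rule field_le_epsilon)
  fix e :: real assume "0 < e"
  obtain R where R: "0 < R" "\<And>y. y \<in> closure \<Omega> \<Longrightarrow> (norm (y - x0))\<^sup>2 \<le> R"
    using bounded_sq_dist_bound bounded_closure z(1) by blast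
  define \<epsilon> where "\<epsilon> = e / R"
  have \<epsilon>: "0 < \<epsilon>" "\<epsilon> * R = e" using \<open>0 < e\<close> R(1) by (simp_all add: \<epsilon>_def)
  have W: "diag_quad (\<lambda>i. c i + \<epsilon>) x0 y - e = diag_quad c x0 y - (e - \<epsilon> * (norm (y - x0))\<^sup>2)" for y
    by (simp add: diag_quad_add diag_quad_const)
  have "diag_quad (\<lambda>i. c i + \<epsilon>) x0 x + - e \<le> z x"
  proof (rule visc_super_ell_ge_strict_subsolution[OF z C2_with_diag_quad _ _ x])
    have "2 * \<epsilon> \<le> lambda_j j (diag_mat (\<lambda>i. 2 * (c i + \<epsilon>)))"
      by (rule lambda_j_diag_mat_ge[OF I(1-3)]) (simp add: I(4))
    then show "0 < lambda_j j (diag_mat (\<lambda>i. 2 * (c i + \<epsilon>)))" for y using \<epsilon> by linarith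
    fix y assume "y \<in> frontier \<Omega>"
    then have "\<epsilon> * (norm (y - x0))\<^sup>2 \<le> \<epsilon> * R"
      using R(2)[of y] \<epsilon>(1) by (simp add: frontier_def)
    then have "\<epsilon> * (norm (y - x0))\<^sup>2 \<le> e" using \<epsilon>(2) by simp
    then show "diag_quad (\<lambda>i. c i + \<epsilon>) x0 y + - e \<le> z y" using bdry[OF \<open>y \<in> frontier \<Omega>\<close>] W by simp
  qed
  moreover have "0 \<le> \<epsilon> * (norm (x - x0))\<^sup>2" using \<epsilon>(1) by simp
  ultimately show "diag_quad c x0 x \<le> z x + e" using W[of x] by linarith
qed

lemma visc_super_par_ge_diag_quad:
  fixes c :: "'n::finite \<Rightarrow> real" and \<Omega> :: "(real^'n) set"
  assumes u: "visc_super_par j \<Omega> u" "continuous_on (closure \<Omega> \<times> {0..}) (\<lambda>(x, t). u x t)"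
    and \<Omega>: "open \<Omega>" "bounded \<Omega>"
    and lateral: "\<And>x t. x \<in> frontier \<Omega> \<Longrightarrow> 0 < t \<Longrightarrow> diag_quad c x0 x \<le> u x t"
    and init: "\<And>x. x \<in> closure \<Omega> \<Longrightarrow> diag_quad c x0 x \<le> u x 0"
    and I: "card I = CARD('n) + 1 - j" "1 \<le> j" "j \<le> CARD('n)" "\<And>i. i \<in> I \<Longrightarrow> 0 \<le> c i"
    and x: "x \<in> closure \<Omega>" "0 \<le> t"
  shows "diag_quad c x0 x \<le> u x t"
proof (rule field_le_epsilon)
  fix e :: real assume "0 < e"
  define \<epsilon> where "\<epsilon> = e / (1 + t)"
  have \<epsilon>: "0 < \<epsilon>" "\<epsilon> * (1 + t) = e" using \<open>0 < e\<close> x(2) by (simp_all add: \<epsilon>_def)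
  have "0 \<le> lambda_j j (diag_mat (\<lambda>i. 2 * c i))"
    by (rule lambda_j_diag_mat_ge[OF I(1-3)]) (simp add: I(4))
  then have "diag_quad c x0 x + - \<epsilon> * (1 + t) \<le> u x t"
  proof (intro visc_super_par_ge_strict_subsolution[OF u compact_closure[THEN iffD2, OF \<Omega>(2)] order_refl
        \<Omega>(1) closure_subset order_refl C21_with_add_time[OF C21_with_diag_quad, of _ "\<lambda>r. - \<epsilon>"] _ _ _ x])
    fix y and r :: real assume "y \<in> closure \<Omega> - \<Omega>" "0 < r"
    then show "diag_quad c x0 y + - \<epsilon> * (1 + r) \<le> u y r"
      using lateral[of y r] closure_Un_frontier[of \<Omega>] mult_pos_pos[OF \<epsilon>(1), of "1 + r"] by auto
  next
    fix y assume "y \<in> closure \<Omega>"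
    then show "diag_quad c x0 y + - \<epsilon> * (1 + 0) \<le> u y 0" using init[of y] \<epsilon>(1) by simp
  qed (use \<epsilon>(1) in \<open>auto intro!: derivative_eq_intros continuous_intros\<close>)
  then show "diag_quad c x0 x \<le> u x t + e" using \<epsilon>(2) by simp
qed

lemma visc_sub_par_le_diag_quad:
  fixes c :: "'n::finite \<Rightarrow> real" and \<Omega> :: "(real^'n) set"
  assumes u: "visc_sub_par j \<Omega> u" "continuous_on (closure \<Omega> \<times> {0..}) (\<lambda>(x, t). u x t)"
    and \<Omega>: "open \<Omega>" "bounded \<Omega>"
    and lateral: "\<And>x t. x \<in> frontier \<Omega> \<Longrightarrow> 0 < t \<Longrightarrow> u x t \<le> diag_quad c x0 x"
    and init: "\<And>x. x \<in> closure \<Omega> \<Longrightarrow> u x 0 \<le> diag_quad c x0 x"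
    and I: "card I = j" "1 \<le> j" "\<And>i. i \<in> I \<Longrightarrow> c i \<le> 0"
    and x: "x \<in> closure \<Omega>" "0 \<le> t"
  shows "u x t \<le> diag_quad c x0 x"
proof (rule field_le_epsilon)
  fix e :: real assume "0 < e"
  define \<epsilon> where "\<epsilon> = e / (1 + t)"
  have \<epsilon>: "0 < \<epsilon>" "\<epsilon> * (1 + t) = e" using \<open>0 < e\<close> x(2) by (simp_all add: \<epsilon>_def)
  have "lambda_j j (diag_mat (\<lambda>i. 2 * c i)) \<le> 0"
    by (rule lambda_j_diag_mat_le[OF I(1,2)]) (simp add: I(3))
  then have "u x t \<le> diag_quad c x0 x + \<epsilon> * (1 + t)"
  proof (intro visc_sub_par_le_strict_supersolution[OF u compact_closure[THEN iffD2, OF \<Omega>(2)] order_refl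
        \<Omega>(1) closure_subset order_refl C21_with_add_time[OF C21_with_diag_quad, of _ "\<lambda>r. \<epsilon>"] _ _ _ x])
    fix y and r :: real assume "y \<in> closure \<Omega> - \<Omega>" "0 < r"
    then show "u y r \<le> diag_quad c x0 y + \<epsilon> * (1 + r)"
      using lateral[of y r] closure_Un_frontier[of \<Omega>] mult_pos_pos[OF \<epsilon>(1), of "1 + r"] by auto
  next
    fix y assume "y \<in> closure \<Omega>"
    then show "u y 0 \<le> diag_quad c x0 y + \<epsilon> * (1 + 0)" using init[of y] \<epsilon>(1) by simp
  qed (use \<epsilon>(1) in \<open>auto intro!: derivative_eq_intros continuous_intros\<close>)
  then show "u x t \<le> diag_quad c x0 x + e" using \<epsilon>(2) by simp
qed

section \<open>A heat-mode barrier on a cylinder\<close>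

definition cylinder :: "'n \<Rightarrow> real^'n \<Rightarrow> real \<Rightarrow> (real^'n) set" where
  "cylinder i x0 \<rho> = {x. \<bar>x $ i - x0 $ i\<bar> \<le> \<rho> \<and> diag_quad (\<lambda>k. of_bool (k \<noteq> i)) x0 x \<le> \<rho>\<^sup>2}"

definition open_cylinder :: "'n \<Rightarrow> real^'n \<Rightarrow> real \<Rightarrow> (real^'n) set" where
  "open_cylinder i x0 \<rho> = {x. \<bar>x $ i - x0 $ i\<bar> < \<rho> \<and> diag_quad (\<lambda>k. of_bool (k \<noteq> i)) x0 x < \<rho>\<^sup>2}"

lemma norm_diff_sq_split:
  "(norm (x - x0))\<^sup>2 = (x $ i - x0 $ i)\<^sup>2 + diag_quad (\<lambda>k. of_bool (k \<noteq> i)) x0 x"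
proof -
  have "diag_quad (\<lambda>k. of_bool (k \<noteq> i)) x0 x = diag_quad (\<lambda>k. 1 - of_bool (k = i)) x0 x"
    by (rule arg_cong[where f = "\<lambda>c. diag_quad c x0 x"]) auto
  also have "\<dots> = (norm (x - x0))\<^sup>2 - (x $ i - x0 $ i)\<^sup>2"
    by (simp add: diag_quad_diff diag_quad_const) (simp add: diag_quad_def)
  finally show ?thesis by simp
qed

lemma center_in_cylinder: "0 \<le> \<rho> \<Longrightarrow> x0 \<in> cylinder i x0 \<rho>"
  by (simp add: cylinder_def)

lemma cylinder_subset_cball:
  assumes "0 \<le> \<rho>"
  shows "cylinder i x0 \<rho> \<subseteq> cball x0 (2 * \<rho>)"
proof
  fix x assume x: "x \<in> cylinder i x0 \<rho>"
  have "\<bar>x $ i - x0 $ i\<bar>\<^sup>2 \<le> \<rho>\<^sup>2"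
    using x by (intro power_mono) (simp_all add: cylinder_def)
  moreover have "diag_quad (\<lambda>k. of_bool (k \<noteq> i)) x0 x \<le> \<rho>\<^sup>2"
    using x by (simp add: cylinder_def)
  moreover have "(norm (x - x0))\<^sup>2 = \<bar>x $ i - x0 $ i\<bar>\<^sup>2 + diag_quad (\<lambda>k. of_bool (k \<noteq> i)) x0 x"
    using norm_diff_sq_split[of x x0 i] by simp
  moreover have "(2 * \<rho>)\<^sup>2 = 4 * \<rho>\<^sup>2" by (simp add: power_mult_distrib)
  ultimately have "(norm (x - x0))\<^sup>2 \<le> (2 * \<rho>)\<^sup>2"
    using zero_le_power2[of \<rho>] by linarith
  then have "norm (x - x0) \<le> 2 * \<rho>"
    by (rule power2_le_imp_le) (use assms in simp)
  then show "x \<in> cball x0 (2 * \<rho>)"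
    by (simp add: dist_norm norm_minus_commute)
qed

lemma compact_cylinder:
  assumes "0 \<le> \<rho>"
  shows "compact (cylinder i x0 \<rho>)"
  unfolding compact_eq_bounded_closed
proof
  show "bounded (cylinder i x0 \<rho>)"
    using cylinder_subset_cball[OF assms] bounded_cball bounded_subset by blast
  show "closed (cylinder i x0 \<rho>)"
    unfolding cylinder_def Collect_conj_eq
    by (intro closed_Int closed_Collect_le continuous_on_diag_quad continuous_intros)
qed

lemma open_open_cylinder: "open (open_cylinder i x0 \<rho>)"
  unfolding open_cylinder_def Collect_conj_eq
  by (intro open_Int open_Collect_less continuous_intros)

lemma open_cylinder_subset: "open_cylinder i x0 \<rho> \<subseteq> cylinder i x0 \<rho>"
  by (auto simp: open_cylinder_def cylinder_def)

definition heat_mode :: "'n \<Rightarrow> real^'n \<Rightarrow> real \<Rightarrow> real^'n \<Rightarrow> real \<Rightarrow> real" where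
  "heat_mode i x0 a x t = exp (- a\<^sup>2 * t) * cos (a * (x $ i - x0 $ i))"

lemma heat_mode_center [simp]: "heat_mode i x0 a x0 t = exp (- a\<^sup>2 * t)"
  by (simp add: heat_mode_def)

lemma heat_mode_le_one:
  assumes "0 \<le> t"
  shows "heat_mode i x0 a x t \<le> 1"
proof -
  have "heat_mode i x0 a x t \<le> exp (- a\<^sup>2 * t)"
    unfolding heat_mode_def by (rule mult_left_le[OF cos_le_one exp_ge_zero])
  also have "\<dots> \<le> 1" using assms by simp
  finally show ?thesis .
qed

lemma C21_with_heat_mode:
  fixes i :: "'n::finite"
  shows "C21_with (\<lambda>x t. A * heat_mode i x0 a x t)
    (\<lambda>x t. (A * exp (- a\<^sup>2 * t) * (- a * sin (a * (x $ i - x0 $ i)))) *\<^sub>R axis i 1)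
    (\<lambda>x t. diag_mat (\<lambda>k. if k = i then - a\<^sup>2 * (A * heat_mode i x0 a x t) else 0))
    (\<lambda>x t. - a\<^sup>2 * (A * heat_mode i x0 a x t))"
proof -
  have "C21_with (\<lambda>x t. A * exp (- a\<^sup>2 * t) * cos (a * (x $ i - x0 $ i)))
    (\<lambda>x t. (A * exp (- a\<^sup>2 * t) * (- a * sin (a * (x $ i - x0 $ i)))) *\<^sub>R axis i 1)
    (\<lambda>x t. diag_mat (\<lambda>k. if k = i then A * exp (- a\<^sup>2 * t) * (- a\<^sup>2 * cos (a * (x $ i - x0 $ i))) else 0))
    (\<lambda>x t. A * (- a\<^sup>2 * exp (- a\<^sup>2 * t)) * cos (a * (x $ i - x0 $ i)))"
    by (rule C21_with_separable)
      (auto intro!: derivative_eq_intros continuous_intros simp: power2_eq_square)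
  then show ?thesis by (simp add: heat_mode_def algebra_simps cong: if_cong)
qed

lemma heat_mode_nonneg_on_cylinder:
  assumes "0 < \<rho>" "x \<in> cylinder i x0 \<rho>"
  shows "0 \<le> heat_mode i x0 (pi / (2 * \<rho>)) x t"
proof -
  have "\<bar>pi / (2 * \<rho>) * (x $ i - x0 $ i)\<bar> = pi / (2 * \<rho>) * \<bar>x $ i - x0 $ i\<bar>"
    using assms(1) by (simp add: abs_mult)
  also have "\<dots> \<le> pi / (2 * \<rho>) * \<rho>"
    using assms by (intro mult_left_mono) (simp_all add: cylinder_def)
  also have "\<dots> = pi / 2" using assms(1) by simp
  finally have bound: "\<bar>pi / (2 * \<rho>) * (x $ i - x0 $ i)\<bar> \<le> pi / 2" .
  have "0 \<le> cos (pi / (2 * \<rho>) * (x $ i - x0 $ i))"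
    using abs_le_D1[OF bound] abs_le_D2[OF bound] by (intro cos_ge_zero) simp_all
  then show ?thesis unfolding heat_mode_def by simp
qed

lemma heat_mode_on_lateral_boundary:
  assumes "0 < \<rho>" "x \<in> cylinder i x0 \<rho> - open_cylinder i x0 \<rho>" "0 \<le> t"
  shows "\<rho>\<^sup>2 * heat_mode i x0 (pi / (2 * \<rho>)) x t \<le> diag_quad (\<lambda>k. of_bool (k \<noteq> i)) x0 x"
proof -
  have q: "0 \<le> diag_quad (\<lambda>k. of_bool (k \<noteq> i)) x0 x" by (rule diag_quad_nonneg) simp
  consider "\<bar>x $ i - x0 $ i\<bar> = \<rho>" | "\<rho>\<^sup>2 \<le> diag_quad (\<lambda>k. of_bool (k \<noteq> i)) x0 x"
    using assms(2) by (force simp: cylinder_def open_cylinder_def)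
  then show ?thesis
  proof cases
    case 1
    have half: "pi / (2 * \<rho>) * \<rho> = pi / 2" using assms(1) by simp
    from 1 have "x $ i - x0 $ i = \<rho> \<or> x $ i - x0 $ i = - \<rho>" by linarith
    then have "cos (pi / (2 * \<rho>) * (x $ i - x0 $ i)) = 0"
      by (elim disjE) (simp_all only: half mult_minus_right cos_minus cos_pi_half)
    then have "heat_mode i x0 (pi / (2 * \<rho>)) x t = 0"
      unfolding heat_mode_def by simp
    then show ?thesis using q by simp
  next
    case 2
    have "\<rho>\<^sup>2 * heat_mode i x0 (pi / (2 * \<rho>)) x t \<le> \<rho>\<^sup>2"
      by (rule mult_left_le[OF heat_mode_le_one[OF assms(3)] zero_le_power2])
    with 2 show ?thesis by linarith
  qed
qed

lemma C21_with_diag_quad_add_heat_mode: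
  fixes i :: "'n::finite"
  shows "C21_with (\<lambda>x t. diag_quad d x0 x + A * heat_mode i x0 a x t)
    (\<lambda>x t. diag_mat (\<lambda>k. 2 * d k) *v (x - x0) + (A * exp (- a\<^sup>2 * t) * (- a * sin (a * (x $ i - x0 $ i)))) *\<^sub>R axis i 1)
    (\<lambda>x t. diag_mat (\<lambda>k. 2 * d k + (if k = i then - a\<^sup>2 * (A * heat_mode i x0 a x t) else 0)))
    (\<lambda>x t. - a\<^sup>2 * (A * heat_mode i x0 a x t))"
  using C21_with_add[OF C21_with_diag_quad C21_with_heat_mode] by (simp add: diag_mat_add)

lemma visc_super_par_cylinder_lower_bound:
  fixes c :: "'n::finite \<Rightarrow> real" and \<Omega> :: "(real^'n) set"
  assumes u: "visc_super_par j \<Omega> u" "continuous_on (closure \<Omega> \<times> {0..}) (\<lambda>(x, t). u x t)"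
    and cyl: "0 < \<rho>" "cylinder i x0 \<rho> \<subseteq> \<Omega>"
    and J: "card (insert i J) = CARD('n) + 1 - j" "1 \<le> j" "j \<le> CARD('n)"
      "0 \<le> c i" "\<And>k. k \<in> J \<Longrightarrow> 1 \<le> c k"
    and lateral: "\<And>x t. x \<in> cylinder i x0 \<rho> \<Longrightarrow> 0 < t \<Longrightarrow> diag_quad c x0 x \<le> u x t"
    and init: "\<And>x. x \<in> cylinder i x0 \<rho> \<Longrightarrow> diag_quad c x0 x + \<rho>\<^sup>2 \<le> u x 0"
    and t: "0 \<le> t"
  shows "\<rho>\<^sup>2 * exp (- (pi / (2 * \<rho>))\<^sup>2 * t) \<le> u x0 t"
proof -
  define a where "a = pi / (2 * \<rho>)"
  define q where "q = diag_quad (\<lambda>k. of_bool (k \<noteq> i)) x0"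
  define d where "d = (\<lambda>k. c k - of_bool (k \<noteq> i))"
  have \<psi>_eq: "diag_quad d x0 x + \<rho>\<^sup>2 * heat_mode i x0 a x t = diag_quad c x0 x - q x + \<rho>\<^sup>2 * heat_mode i x0 a x t"
    for x t by (simp add: d_def q_def diag_quad_diff)
  have q_nonneg: "0 \<le> q x" for x unfolding q_def by (rule diag_quad_nonneg) simp
  have "diag_quad d x0 x0 + \<rho>\<^sup>2 * heat_mode i x0 a x0 t \<le> u x0 t"
  proof (rule visc_super_par_ge_strict_subsolution[OF u compact_cylinder _ open_open_cylinder
        open_cylinder_subset _ C21_with_diag_quad_add_heat_mode _ _ _ center_in_cylinder t])
    show "cylinder i x0 \<rho> \<subseteq> closure \<Omega>" "open_cylinder i x0 \<rho> \<subseteq> \<Omega>"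
      using cyl(2) closure_subset open_cylinder_subset by blast+
    fix x and s :: real assume "x \<in> open_cylinder i x0 \<rho>" "0 < s"
    then have "0 \<le> heat_mode i x0 a x s"
      unfolding a_def using heat_mode_nonneg_on_cylinder cyl(1) open_cylinder_subset by blast
    then have "0 \<le> a\<^sup>2 * (\<rho>\<^sup>2 * heat_mode i x0 a x s)" by simp
    then show "- a\<^sup>2 * (\<rho>\<^sup>2 * heat_mode i x0 a x s)
        \<le> lambda_j j (diag_mat (\<lambda>k. 2 * d k + (if k = i then - a\<^sup>2 * (\<rho>\<^sup>2 * heat_mode i x0 a x s) else 0)))"
      by (intro lambda_j_diag_mat_ge[OF J(1-3)]) (auto simp: d_def J(4) dest: J(5))
  next
    fix x and s :: real assume x: "x \<in> cylinder i x0 \<rho> - open_cylinder i x0 \<rho>" and "0 < s"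
    then have "\<rho>\<^sup>2 * heat_mode i x0 a x s \<le> q x"
      unfolding a_def q_def by (intro heat_mode_on_lateral_boundary[OF cyl(1)]) simp_all
    then show "diag_quad d x0 x + \<rho>\<^sup>2 * heat_mode i x0 a x s \<le> u x s"
      using lateral[of x s] x \<open>0 < s\<close> by (simp add: \<psi>_eq)
  next
    fix x assume "x \<in> cylinder i x0 \<rho>"
    moreover have "\<rho>\<^sup>2 * heat_mode i x0 a x 0 \<le> \<rho>\<^sup>2"
      by (rule mult_left_le[OF heat_mode_le_one zero_le_power2]) simp
    ultimately show "diag_quad d x0 x + \<rho>\<^sup>2 * heat_mode i x0 a x 0 \<le> u x 0"
      using init[of x] q_nonneg[of x] by (simp add: \<psi>_eq)
  qed (use cyl(1) in auto)
  then show ?thesis by (simp add: a_def)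
qed

lemma visc_sub_par_cylinder_upper_bound:
  fixes c :: "'n::finite \<Rightarrow> real" and \<Omega> :: "(real^'n) set"
  assumes u: "visc_sub_par j \<Omega> u" "continuous_on (closure \<Omega> \<times> {0..}) (\<lambda>(x, t). u x t)"
    and cyl: "0 < \<rho>" "cylinder i x0 \<rho> \<subseteq> \<Omega>"
    and I: "card (insert i I) = j" "1 \<le> j" "c i \<le> 0" "\<And>k. k \<in> I \<Longrightarrow> c k \<le> -1"
    and lateral: "\<And>x t. x \<in> cylinder i x0 \<rho> \<Longrightarrow> 0 < t \<Longrightarrow> u x t \<le> diag_quad c x0 x"
    and init: "\<And>x. x \<in> cylinder i x0 \<rho> \<Longrightarrow> u x 0 \<le> diag_quad c x0 x - \<rho>\<^sup>2"
    and t: "0 \<le> t"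
  shows "u x0 t \<le> - (\<rho>\<^sup>2 * exp (- (pi / (2 * \<rho>))\<^sup>2 * t))"
proof -
  define a where "a = pi / (2 * \<rho>)"
  define q where "q = diag_quad (\<lambda>k. of_bool (k \<noteq> i)) x0"
  define d where "d = (\<lambda>k. c k + of_bool (k \<noteq> i))"
  have \<psi>_eq: "diag_quad d x0 x - \<rho>\<^sup>2 * heat_mode i x0 a x t = diag_quad c x0 x + q x - \<rho>\<^sup>2 * heat_mode i x0 a x t"
    for x t by (simp add: d_def q_def diag_quad_add)
  have q_nonneg: "0 \<le> q x" for x unfolding q_def by (rule diag_quad_nonneg) simp
  have "u x0 t \<le> diag_quad d x0 x0 + - \<rho>\<^sup>2 * heat_mode i x0 a x0 t"
  proof (rule visc_sub_par_le_strict_supersolution[OF u compact_cylinder _ open_open_cylinder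
        open_cylinder_subset _ C21_with_diag_quad_add_heat_mode _ _ _ center_in_cylinder t])
    show "cylinder i x0 \<rho> \<subseteq> closure \<Omega>" "open_cylinder i x0 \<rho> \<subseteq> \<Omega>"
      using cyl(2) closure_subset open_cylinder_subset by blast+
    fix x and s :: real assume "x \<in> open_cylinder i x0 \<rho>" "0 < s"
    then have "0 \<le> heat_mode i x0 a x s"
      unfolding a_def using heat_mode_nonneg_on_cylinder cyl(1) open_cylinder_subset by blast
    then have "0 \<le> a\<^sup>2 * (\<rho>\<^sup>2 * heat_mode i x0 a x s)" by simp
    then show "lambda_j j (diag_mat (\<lambda>k. 2 * d k + (if k = i then - a\<^sup>2 * (- \<rho>\<^sup>2 * heat_mode i x0 a x s) else 0)))
        \<le> - a\<^sup>2 * (- \<rho>\<^sup>2 * heat_mode i x0 a x s)"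
      by (intro lambda_j_diag_mat_le[OF I(1,2)]) (auto simp: d_def I(3) dest: I(4))
  next
    fix x and s :: real assume x: "x \<in> cylinder i x0 \<rho> - open_cylinder i x0 \<rho>" and "0 < s"
    then have "\<rho>\<^sup>2 * heat_mode i x0 a x s \<le> q x"
      unfolding a_def q_def by (intro heat_mode_on_lateral_boundary[OF cyl(1)]) simp_all
    then show "u x s \<le> diag_quad d x0 x + - \<rho>\<^sup>2 * heat_mode i x0 a x s"
      using lateral[of x s] x \<open>0 < s\<close> by (simp add: \<psi>_eq)
  next
    fix x assume "x \<in> cylinder i x0 \<rho>"
    moreover have "\<rho>\<^sup>2 * heat_mode i x0 a x 0 \<le> \<rho>\<^sup>2"
      by (rule mult_left_le[OF heat_mode_le_one zero_le_power2]) simp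
    ultimately show "u x 0 \<le> diag_quad d x0 x + - \<rho>\<^sup>2 * heat_mode i x0 a x 0"
      using init[of x] q_nonneg[of x] by (simp add: \<psi>_eq)
  qed (use cyl(1) in auto)
  then show ?thesis by (simp add: a_def)
qed

section \<open>Choice of the data\<close>

definition saddle_coeff :: "'n \<Rightarrow> 'n set \<Rightarrow> 'n \<Rightarrow> real" where
  "saddle_coeff i K k = (if k = i then 0 else if k \<in> K then -1 else 1)"

lemma saddle_coeff_signs:
  assumes "i \<notin> K"
  shows "\<And>k. k \<in> insert i K \<Longrightarrow> saddle_coeff i K k \<le> 0"
    and "\<And>k. k \<in> insert i (- insert i K) \<Longrightarrow> 0 \<le> saddle_coeff i K k"
    and "\<And>k. k \<in> K \<Longrightarrow> saddle_coeff i K k = -1"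
    and "\<And>k. k \<in> - insert i K \<Longrightarrow> saddle_coeff i K k = 1"
    and "saddle_coeff i K i = 0"
  using assms by (auto simp: saddle_coeff_def)

lemma card_insert_Compl_insert:
  fixes K :: "'n::finite set"
  assumes "i \<notin> K"
  shows "card (insert i (- insert i K)) = CARD('n) + 1 - card (insert i K)"
proof -
  have "card (insert i K) \<le> CARD('n)" by (rule card_mono) simp_all
  moreover have "card (- insert i K) = CARD('n) - card (insert i K)"
    by (simp add: Compl_eq_Diff_UNIV card_Diff_subset)
  ultimately show ?thesis by simp
qed

lemma obtain_cylinder_subset:
  fixes \<Omega> :: "(real^'n) set"
  assumes "open \<Omega>" "x0 \<in> \<Omega>"
  obtains \<rho> where "0 < \<rho>" "cylinder i x0 \<rho> \<subseteq> \<Omega>"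
proof -
  obtain r where r: "0 < r" "ball x0 r \<subseteq> \<Omega>" using assms open_contains_ball by blast
  have "cylinder i x0 (r / 3) \<subseteq> cball x0 (2 * (r / 3))" using r(1) by (intro cylinder_subset_cball) simp
  also have "\<dots> \<subseteq> ball x0 r" using r(1) by (simp add: cball_subset_ball_iff)
  finally show ?thesis using r by (intro that[of "r / 3"]) auto
qed

lemma obtain_cylinder_cutoff:
  fixes \<Omega> :: "(real^'n) set"
  assumes "open \<Omega>" "0 < \<rho>" "cylinder i x0 \<rho> \<subseteq> \<Omega>"
  obtains f :: "real^'n \<Rightarrow> real" where "continuous_on UNIV f" "\<And>x. 0 \<le> f x"
    "\<And>x. x \<in> cylinder i x0 \<rho> \<Longrightarrow> f x = 1" "\<And>x. x \<in> frontier \<Omega> \<Longrightarrow> f x = 0"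
proof -
  have "closed (cylinder i x0 \<rho>)" using compact_cylinder assms(2) compact_imp_closed less_imp_le by blast
  moreover have "closed (- \<Omega>)" using assms(1) by (rule closed_Compl)
  moreover have "cylinder i x0 \<rho> \<inter> - \<Omega> = {}" using assms(3) by blast
  ultimately obtain f :: "real^'n \<Rightarrow> real" where f: "continuous_on UNIV f" "\<And>x. f x \<in> closed_segment 1 0"
    "\<And>x. x \<in> cylinder i x0 \<rho> \<Longrightarrow> f x = 1" "\<And>x. x \<in> - \<Omega> \<Longrightarrow> f x = 0"
    by (rule Urysohn[where a = 1 and b = 0]) blast
  moreover have "frontier \<Omega> \<subseteq> - \<Omega>" using assms(1) by (auto simp: frontier_def interior_open)
  ultimately show ?thesis
    by (intro that[of f]) (auto simp: closed_segment_eq_real_ivl)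
qed

lemma exists_data_above_equilibrium:
  fixes \<Omega> :: "(real^'n) set" and f :: "real^'n \<Rightarrow> real"
  assumes \<Omega>: "open \<Omega>" "bounded \<Omega>" and j: "1 \<le> j" "j \<le> CARD('n)"
    and cyl: "0 < \<rho>" "cylinder i x0 \<rho> \<subseteq> \<Omega>"
    and K: "i \<notin> K" "card (insert i K) = j"
    and f: "continuous_on UNIV f" "\<And>x. 0 \<le> f x" "\<And>x. x \<in> cylinder i x0 \<rho> \<Longrightarrow> f x = 1"
      "\<And>x. x \<in> frontier \<Omega> \<Longrightarrow> f x = 0"
  shows "\<exists>g u0 \<mu>1 k.
            continuous_on (frontier \<Omega>) g \<and> continuous_on (closure \<Omega>) u0 \<and>
            (\<forall>x\<in>frontier \<Omega>. u0 x = g x) \<and> \<mu>1 > 0 \<and> k > 0 \<and>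
            (\<forall>u z. parabolic_solution j \<Omega> g u0 u \<longrightarrow> elliptic_solution j \<Omega> g z \<longrightarrow>
               (\<forall>t>0. u x0 t \<ge> z x0 + k * exp (- \<mu>1 * t)))"
proof (intro exI conjI allI impI)
  let ?c = "saddle_coeff i K"
  let ?h = "diag_quad ?c x0"
  let ?u0 = "\<lambda>x. ?h x + \<rho>\<^sup>2 * f x"
  show "continuous_on (frontier \<Omega>) ?h" "continuous_on (closure \<Omega>) ?u0"
    using continuous_on_subset[OF f(1) subset_UNIV] by (auto intro!: continuous_intros)
  show "\<forall>x\<in>frontier \<Omega>. ?u0 x = ?h x" using f(4) by simp
  show "0 < (pi / (2 * \<rho>))\<^sup>2" "0 < \<rho>\<^sup>2" using cyl(1) by simp_all
  fix u z and t :: real assume u: "parabolic_solution j \<Omega> ?h ?u0 u" and z: "elliptic_solution j \<Omega> ?h z" and "0 < t"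
  have "x0 \<in> \<Omega>" using cyl center_in_cylinder[of \<rho> x0 i] by auto
  then have x0: "x0 \<in> closure \<Omega>" using closure_subset by blast
  have L: "card (insert i (- insert i K)) = CARD('n) + 1 - j"
    using card_insert_Compl_insert[OF K(1)] K(2) by simp
  have "z x0 \<le> ?h x0"
    using z unfolding elliptic_solution_def
    by (intro visc_sub_ell_le_diag_quad[OF \<Omega>(2) _ _ _ K(2) j(1) saddle_coeff_signs(1)[OF K(1)] x0]) auto
  then have "z x0 \<le> 0" by simp
  have uc: "continuous_on (closure \<Omega> \<times> {0..}) (\<lambda>(x, t). u x t)"
    and lateral: "\<And>x t. x \<in> frontier \<Omega> \<Longrightarrow> 0 < t \<Longrightarrow> u x t = ?h x"
    and super: "visc_super_par j \<Omega> u"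
    using u unfolding parabolic_solution_def by auto
  have init: "u x 0 = ?u0 x" if "x \<in> closure \<Omega>" for x
    using parabolic_solution_at_zero[OF u _ that] f(4) by simp
  have above: "?h x \<le> u x s" if "x \<in> closure \<Omega>" "0 \<le> s" for x s
  proof (rule visc_super_par_ge_diag_quad[OF super uc \<Omega> _ _ L j saddle_coeff_signs(2)[OF K(1)] that])
    show "?h y \<le> u y 0" if "y \<in> closure \<Omega>" for y using init[OF that] f(2)[of y] by simp
  qed (simp add: lateral)
  have "\<rho>\<^sup>2 * exp (- (pi / (2 * \<rho>))\<^sup>2 * t) \<le> u x0 t"
  proof (rule visc_super_par_cylinder_lower_bound[where c = ?c, OF super uc cyl L j
        eq_refl[OF saddle_coeff_signs(5)[OF K(1), symmetric]]])
    fix x assume x: "x \<in> cylinder i x0 \<rho>"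
    then have "x \<in> closure \<Omega>" using cyl(2) closure_subset by blast
    then show "?h x + \<rho>\<^sup>2 \<le> u x 0" "\<And>s. 0 < s \<Longrightarrow> ?h x \<le> u x s"
      using init f(3)[OF x] above by auto
  qed (use \<open>0 < t\<close> saddle_coeff_signs(4)[OF K(1)] in auto)
  with \<open>z x0 \<le> 0\<close> show "z x0 + \<rho>\<^sup>2 * exp (- (pi / (2 * \<rho>))\<^sup>2 * t) \<le> u x0 t" by simp
qed

lemma exists_data_below_equilibrium:
  fixes \<Omega> :: "(real^'n) set" and f :: "real^'n \<Rightarrow> real"
  assumes \<Omega>: "open \<Omega>" "bounded \<Omega>" and j: "1 \<le> j" "j \<le> CARD('n)"
    and cyl: "0 < \<rho>" "cylinder i x0 \<rho> \<subseteq> \<Omega>"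
    and K: "i \<notin> K" "card (insert i K) = j"
    and f: "continuous_on UNIV f" "\<And>x. 0 \<le> f x" "\<And>x. x \<in> cylinder i x0 \<rho> \<Longrightarrow> f x = 1"
      "\<And>x. x \<in> frontier \<Omega> \<Longrightarrow> f x = 0"
  shows "\<exists>g u0 \<mu>1 k.
            continuous_on (frontier \<Omega>) g \<and> continuous_on (closure \<Omega>) u0 \<and>
            (\<forall>x\<in>frontier \<Omega>. u0 x = g x) \<and> \<mu>1 > 0 \<and> k > 0 \<and>
            (\<forall>u z. parabolic_solution j \<Omega> g u0 u \<longrightarrow> elliptic_solution j \<Omega> g z \<longrightarrow>
               (\<forall>t>0. u x0 t \<le> z x0 - k * exp (- \<mu>1 * t)))"
proof (intro exI conjI allI impI)
  let ?c = "saddle_coeff i K"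
  let ?h = "diag_quad ?c x0"
  let ?u0 = "\<lambda>x. ?h x - \<rho>\<^sup>2 * f x"
  show "continuous_on (frontier \<Omega>) ?h" "continuous_on (closure \<Omega>) ?u0"
    using continuous_on_subset[OF f(1) subset_UNIV] by (auto intro!: continuous_intros)
  show "\<forall>x\<in>frontier \<Omega>. ?u0 x = ?h x" using f(4) by simp
  show "0 < (pi / (2 * \<rho>))\<^sup>2" "0 < \<rho>\<^sup>2" using cyl(1) by simp_all
  fix u z and t :: real assume u: "parabolic_solution j \<Omega> ?h ?u0 u" and z: "elliptic_solution j \<Omega> ?h z" and "0 < t"
  have "x0 \<in> \<Omega>" using cyl center_in_cylinder[of \<rho> x0 i] by auto
  then have x0: "x0 \<in> closure \<Omega>" using closure_subset by blast
  have L: "card (insert i (- insert i K)) = CARD('n) + 1 - j"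
    using card_insert_Compl_insert[OF K(1)] K(2) by simp
  have "?h x0 \<le> z x0"
    using z unfolding elliptic_solution_def
    by (intro visc_super_ell_ge_diag_quad[OF \<Omega>(2) _ _ _ L j saddle_coeff_signs(2)[OF K(1)] x0]) auto
  then have "0 \<le> z x0" by simp
  have uc: "continuous_on (closure \<Omega> \<times> {0..}) (\<lambda>(x, t). u x t)"
    and lateral: "\<And>x t. x \<in> frontier \<Omega> \<Longrightarrow> 0 < t \<Longrightarrow> u x t = ?h x"
    and sub: "visc_sub_par j \<Omega> u"
    using u unfolding parabolic_solution_def by auto
  have init: "u x 0 = ?u0 x" if "x \<in> closure \<Omega>" for x
    using parabolic_solution_at_zero[OF u _ that] f(4) by simp
  have below: "u x s \<le> ?h x" if "x \<in> closure \<Omega>" "0 \<le> s" for x s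
  proof (rule visc_sub_par_le_diag_quad[OF sub uc \<Omega> _ _ K(2) j(1) saddle_coeff_signs(1)[OF K(1)] that])
    show "u y 0 \<le> ?h y" if "y \<in> closure \<Omega>" for y using init[OF that] f(2)[of y] by simp
  qed (simp add: lateral)
  have "u x0 t \<le> - (\<rho>\<^sup>2 * exp (- (pi / (2 * \<rho>))\<^sup>2 * t))"
  proof (rule visc_sub_par_cylinder_upper_bound[where c = ?c, OF sub uc cyl K(2) j(1)
        eq_refl[OF saddle_coeff_signs(5)[OF K(1)]]])
    fix x assume x: "x \<in> cylinder i x0 \<rho>"
    then have "x \<in> closure \<Omega>" using cyl(2) closure_subset by blast
    then show "u x 0 \<le> ?h x - \<rho>\<^sup>2" "\<And>s. 0 < s \<Longrightarrow> u x s \<le> ?h x"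
      using init f(3)[OF x] below by auto
  qed (use \<open>0 < t\<close> saddle_coeff_signs(3)[OF K(1)] in auto)
  with \<open>0 \<le> z x0\<close> show "u x0 t \<le> z x0 - \<rho>\<^sup>2 * exp (- (pi / (2 * \<rho>))\<^sup>2 * t)" by simp
qed

lemma obtain_insert_with_card:
  assumes "1 \<le> j" "j \<le> CARD('n)"
  obtains i :: "'n::finite" and K where "i \<notin> K" "card (insert i K) = j"
proof -
  obtain S :: "'n set" where S: "card S = j"
    using obtain_subset_with_card_n[of j "UNIV :: 'n set"] assms(2) by auto
  then have "S \<noteq> {}" using assms(1) by auto
  then obtain i where "i \<in> S" by blast
  with S show ?thesis by (intro that[of i "S - {i}"]) (simp_all add: insert_absorb)
qed

theorem theorem3p5:
  fixes \<Omega> :: "(real^'n) set" and j :: nat and x0 :: "real^'n"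
  assumes "open \<Omega>" and "connected \<Omega>" and "bounded \<Omega>"
    and "1 \<le> j" and "j \<le> CARD('n)"
    and "x0 \<in> \<Omega>"
  shows "(\<exists>g u0 \<mu>1 k.
            continuous_on (frontier \<Omega>) g \<and> continuous_on (closure \<Omega>) u0 \<and>
            (\<forall>x\<in>frontier \<Omega>. u0 x = g x) \<and> \<mu>1 > 0 \<and> k > 0 \<and>
            (\<forall>u z. parabolic_solution j \<Omega> g u0 u \<longrightarrow> elliptic_solution j \<Omega> g z \<longrightarrow>
               (\<forall>t>0. u x0 t \<ge> z x0 + k * exp (- \<mu>1 * t))))
       \<and> (\<exists>g u0 \<mu>1 k.
            continuous_on (frontier \<Omega>) g \<and> continuous_on (closure \<Omega>) u0 \<and>
            (\<forall>x\<in>frontier \<Omega>. u0 x = g x) \<and> \<mu>1 > 0 \<and> k > 0 \<and>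
            (\<forall>u z. parabolic_solution j \<Omega> g u0 u \<longrightarrow> elliptic_solution j \<Omega> g z \<longrightarrow>
               (\<forall>t>0. u x0 t \<le> z x0 - k * exp (- \<mu>1 * t))))"
proof -
  obtain i :: 'n and K where K: "i \<notin> K" "card (insert i K) = j"
    by (rule obtain_insert_with_card[OF assms(4,5)])
  obtain \<rho> where \<rho>: "0 < \<rho>" and cyl: "cylinder i x0 \<rho> \<subseteq> \<Omega>"
    by (rule obtain_cylinder_subset[OF assms(1,6)])
  obtain f :: "real^'n \<Rightarrow> real" where "continuous_on UNIV f" "\<And>x. 0 \<le> f x"
    "\<And>x. x \<in> cylinder i x0 \<rho> \<Longrightarrow> f x = 1" "\<And>x. x \<in> frontier \<Omega> \<Longrightarrow> f x = 0"
    using obtain_cylinder_cutoff[OF assms(1) \<rho> cyl] by blast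
  then show ?thesis
    using exists_data_above_equilibrium[OF assms(1,3,4,5) \<rho> cyl K]
      exists_data_below_equilibrium[OF assms(1,3,4,5) \<rho> cyl K] by blast
qed

end
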